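(* Let $M$ be a loopless binary matroid of rank $r$ on ground set $S$. Every rainbow circuit-free coloring of $M$ with exactly $r$ colors is standard. In particular, one of the color classes consists of pairwise parallel elements of $M$.
   Context: A coloring of $S$ is a partition of $S$ into nonempty color classes; it is rainbow circuit-free if no circuit of $M$ has all its elements of pairwise different colors. A coloring of a rank-$r$ matroid $M$ with color classes $S_1,\dots,S_r$ is standard if, after possibly reindexing the classes, $S_i$ is a cut of the restriction $M|(S_1\cup\dots\cup S_i)$ for every $i=1,\dots,r$. A cut of a matroid is an inclusionwise minimal subset of the ground set intersecting every basis. Two non-loop elements $e,f$ are parallel if $r_M(\{e,f\})=1$. A matroid is binary if it is representable over $GF(2)$. *)

theory Defs
  imports Main "HOL-Library.Disjoint_Sets" "HOL-Library.Z2"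
begin

definition matroid :: "'a set \<Rightarrow> ('a set \<Rightarrow> bool) \<Rightarrow> bool" where
  "matroid S indep \<longleftrightarrow> finite S \<and> indep {} \<and> (\<forall>X. indep X \<longrightarrow> X \<subseteq> S)
     \<and> (\<forall>X Y. indep X \<and> Y \<subseteq> X \<longrightarrow> indep Y)
     \<and> (\<forall>X Y. indep X \<and> indep Y \<and> card X < card Y \<longrightarrow> (\<exists>e\<in>Y - X. indep (insert e X)))"

definition mrank :: "('a set \<Rightarrow> bool) \<Rightarrow> 'a set \<Rightarrow> nat" where
  "mrank indep X = Max {card Y | Y. Y \<subseteq> X \<and> indep Y}"

definition circuit :: "'a set \<Rightarrow> ('a set \<Rightarrow> bool) \<Rightarrow> 'a set \<Rightarrow> bool" where
  "circuit S indep C \<longleftrightarrow> C \<subseteq> S \<and> \<not> indep C \<and> (\<forall>D. D \<subset> C \<longrightarrow> indep D)"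

definition loopless :: "'a set \<Rightarrow> ('a set \<Rightarrow> bool) \<Rightarrow> bool" where
  "loopless S indep \<longleftrightarrow> (\<forall>e\<in>S. \<not> circuit S indep {e})"

text \<open>Binary: representable over GF(2), i.e. there are vectors v e over GF(2) such that
  X is independent iff the family (v e)_{e \<in> X} is linearly independent over GF(2)
  (over GF(2) a nontrivial linear relation is a nonempty subfamily summing to zero).\<close>
definition binary :: "'a set \<Rightarrow> ('a set \<Rightarrow> bool) \<Rightarrow> bool" where
  "binary S indep \<longleftrightarrow> (\<exists>v :: 'a \<Rightarrow> nat \<Rightarrow> bit. \<forall>X \<subseteq> S.
      indep X \<longleftrightarrow> \<not> (\<exists>Y \<subseteq> X. Y \<noteq> {} \<and> (\<forall>k. (\<Sum>y\<in>Y. v y k) = 0)))"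

definition basis_of :: "('a set \<Rightarrow> bool) \<Rightarrow> 'a set \<Rightarrow> 'a set \<Rightarrow> bool" where
  "basis_of indep T B \<longleftrightarrow> B \<subseteq> T \<and> indep B \<and>
     (\<forall>B'. B \<subseteq> B' \<and> B' \<subseteq> T \<and> indep B' \<longrightarrow> B' = B)"

definition is_cut :: "('a set \<Rightarrow> bool) \<Rightarrow> 'a set \<Rightarrow> 'a set \<Rightarrow> bool" where
  "is_cut indep T D \<longleftrightarrow> D \<subseteq> T \<and> (\<forall>B. basis_of indep T B \<longrightarrow> D \<inter> B \<noteq> {}) \<and>
     (\<forall>D'. D' \<subset> D \<longrightarrow> (\<exists>B. basis_of indep T B \<and> D' \<inter> B = {}))"

definition parallel :: "('a set \<Rightarrow> bool) \<Rightarrow> 'a \<Rightarrow> 'a \<Rightarrow> bool" where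
  "parallel indep e f \<longleftrightarrow> indep {e} \<and> indep {f} \<and> mrank indep {e, f} = 1"

text \<open>A coloring is a partition P of S into nonempty classes (partition_on).\<close>
definition rainbow_circuit_free :: "'a set \<Rightarrow> ('a set \<Rightarrow> bool) \<Rightarrow> 'a set set \<Rightarrow> bool" where
  "rainbow_circuit_free S indep P \<longleftrightarrow>
     \<not> (\<exists>C. circuit S indep C \<and> (\<forall>A\<in>P. card (C \<inter> A) \<le> 1))"

definition standard_coloring :: "('a set \<Rightarrow> bool) \<Rightarrow> nat \<Rightarrow> 'a set set \<Rightarrow> bool" where
  "standard_coloring indep r P \<longleftrightarrow> (\<exists>Sc :: nat \<Rightarrow> 'a set. bij_betw Sc {1..r} P \<and>
     (\<forall>i\<in>{1..r}. is_cut indep (\<Union>j\<in>{1..i}. Sc j) (Sc i)))"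

end

(* Every transversal of a rainbow circuit-free coloring is independent, since a dependent
   transversal contains a rainbow circuit; with r = rank M classes the transversals are
   therefore bases. If some class A lowers the rank, r(S - A) < r, then A is a cut of M and
   the remaining classes form such a coloring of M|(S - A); by induction the coloring is
   standard, and its first class, being a cut of itself, consists of pairwise parallel
   elements.

   Binarity is what provides such a class. Fix a transversal basis b. If no class lowers
   the rank, every class A lies on the fundamental circuit, with respect to b, of an
   element x of some other class A' (an arc A' -> A). A minimal set of classes in which
   every class has an incoming arc is a directed cycle. Adding the fundamental circuits
   along the cycle over GF(2), every class of the cycle is hit exactly twice, so trading
   b for the elements x on the cycle yields a transversal containing a nonempty set of
   vectors summing to zero, contradicting its independence. *)

theory Submission
  imports Defs "HOL-Library.Function_Algebras"
begin

section \<open>Odd covers\<close>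

definition odd_cover :: "'i set \<Rightarrow> ('i \<Rightarrow> 'j set) \<Rightarrow> 'j set" where
  "odd_cover J \<rho> = {x. odd (card {i\<in>J. x \<in> \<rho> i})}"

lemma odd_cover_subset: "odd_cover J \<rho> \<subseteq> (\<Union>i\<in>J. \<rho> i)"
proof
  fix x assume "x \<in> odd_cover J \<rho>"
  then have "odd (card {i\<in>J. x \<in> \<rho> i})"
    by (simp add: odd_cover_def)
  then have "{i\<in>J. x \<in> \<rho> i} \<noteq> {}"
    by (intro notI) simp
  then show "x \<in> (\<Union>i\<in>J. \<rho> i)" by blast
qed

lemma of_nat_char_2:
  assumes "(2::'b::comm_ring_1) = 0"
  shows "(of_nat n :: 'b) = of_bool (odd n)"
  using assms by (induction n) auto

lemma sum_odd_cover:
  fixes w :: "'j \<Rightarrow> 'b::comm_ring_1"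
  assumes char_2: "(2::'b) = 0" and J: "finite J" and \<rho>: "\<And>i. i \<in> J \<Longrightarrow> finite (\<rho> i)"
  shows "(\<Sum>i\<in>J. \<Sum>x\<in>\<rho> i. w x) = (\<Sum>x\<in>odd_cover J \<rho>. w x)"
proof -
  define U where "U = (\<Union>i\<in>J. \<rho> i)"
  have U: "finite U" using J \<rho> by (simp add: U_def)
  have "(\<Sum>i\<in>J. \<Sum>x\<in>\<rho> i. w x) = (\<Sum>i\<in>J. \<Sum>x\<in>U. if x \<in> \<rho> i then w x else 0)"
  proof (rule sum.cong[OF refl])
    fix i assume "i \<in> J"
    then have "U \<inter> \<rho> i = \<rho> i" by (auto simp: U_def)
    then show "(\<Sum>x\<in>\<rho> i. w x) = (\<Sum>x\<in>U. if x \<in> \<rho> i then w x else 0)"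
      by (simp add: sum.inter_restrict[OF U, symmetric])
  qed
  also have "\<dots> = (\<Sum>x\<in>U. \<Sum>i\<in>J. if x \<in> \<rho> i then w x else 0)"
    by (rule sum.swap)
  also have "\<dots> = (\<Sum>x\<in>U. if x \<in> odd_cover J \<rho> then w x else 0)"
  proof (rule sum.cong[OF refl])
    fix x
    have "(\<Sum>i\<in>J. if x \<in> \<rho> i then w x else 0) = (\<Sum>i\<in>{i\<in>J. x \<in> \<rho> i}. w x)"
      by (rule sum.inter_filter[OF J, symmetric])
    also have "\<dots> = of_nat (card {i\<in>J. x \<in> \<rho> i}) * w x"
      by (rule sum_constant)
    finally show "(\<Sum>i\<in>J. if x \<in> \<rho> i then w x else 0) = (if x \<in> odd_cover J \<rho> then w x else 0)"
      unfolding of_nat_char_2[OF char_2] odd_cover_def by simp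
  qed
  also have "\<dots> = (\<Sum>x\<in>U \<inter> odd_cover J \<rho>. w x)"
    by (rule sum.inter_restrict[OF U, symmetric])
  also have "U \<inter> odd_cover J \<rho> = odd_cover J \<rho>"
    using odd_cover_subset[of J \<rho>] by (auto simp: U_def)
  finally show ?thesis .
qed

lemma minimal_pred_closed_is_cycle:
  fixes E :: "'i \<Rightarrow> 'i \<Rightarrow> bool"
  assumes fin: "finite C" and irrefl: "\<forall>j\<in>C. \<not> E j j"
    and preds: "\<forall>j\<in>C. \<exists>i\<in>C. E i j"
    and minimal: "\<forall>C'\<subset>C. C' \<noteq> {} \<longrightarrow> \<not> (\<forall>j\<in>C'. \<exists>i\<in>C'. E i j)"
  obtains p where "bij_betw p C C" and "\<forall>i\<in>C. \<forall>x\<in>C. E i x \<longleftrightarrow> i = p x"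
proof -
  have surj: "q ` C = C" if q: "\<forall>j\<in>C. q j \<in> C \<and> E (q j) j" for q
  proof (rule ccontr)
    assume "q ` C \<noteq> C"
    moreover have "q ` C \<subseteq> C" using q by auto
    ultimately obtain u where u: "u \<in> C" "u \<notin> q ` C" by blast
    have "C - {u} \<noteq> {}"
    proof
      assume "C - {u} = {}"
      with u q have "q u = u" by auto
      with u q irrefl show False by metis
    qed
    moreover have "\<forall>j\<in>C - {u}. \<exists>i\<in>C - {u}. E i j"
      using q u by (metis Diff_iff image_eqI singletonD)
    ultimately show False using minimal u by blast
  qed
  obtain p where p: "\<forall>j\<in>C. p j \<in> C \<and> E (p j) j"
    using preds by metis
  have p_surj: "p ` C = C" by (rule surj[OF p])
  then have p_inj: "inj_on p C" by (simp add: eq_card_imp_inj_on fin)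
  have "i = p x" if "i \<in> C" "x \<in> C" "E i x" for i x
  proof (rule ccontr)
    assume ne: "i \<noteq> p x"
    have "p(x := i) ` C = C" by (rule surj) (use p that in auto)
    then obtain j where j: "j \<in> C" "(p(x := i)) j = p x"
      using p \<open>x \<in> C\<close> by (metis imageE image_eqI)
    with ne have "j \<noteq> x" by auto
    with j have "p j = p x" by simp
    with p_inj j \<open>x \<in> C\<close> \<open>j \<noteq> x\<close> show False by (auto dest: inj_onD)
  qed
  then have "\<forall>i\<in>C. \<forall>x\<in>C. E i x \<longleftrightarrow> i = p x" using p by blast
  moreover have "bij_betw p C C" using p_inj p_surj by (simp add: bij_betw_def)
  ultimately show thesis using that by blast
qed

lemma in_closed_contains_cycle:
  fixes E :: "'i \<Rightarrow> 'i \<Rightarrow> bool"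
  assumes fin: "finite I" and ne: "I \<noteq> {}" and irrefl: "\<forall>j\<in>I. \<not> E j j"
    and preds: "\<forall>j\<in>I. \<exists>i\<in>I. E i j"
  obtains C p where "C \<subseteq> I" "C \<noteq> {}" "bij_betw p C C" "\<forall>i\<in>C. \<forall>x\<in>C. E i x \<longleftrightarrow> i = p x"
proof -
  define closed where "closed C \<longleftrightarrow> C \<subseteq> I \<and> C \<noteq> {} \<and> (\<forall>j\<in>C. \<exists>i\<in>C. E i j)" for C
  have "closed I" using ne preds by (simp add: closed_def)
  then obtain C where C: "closed C" and least: "\<And>C'. closed C' \<Longrightarrow> card C \<le> card C'"
    using ex_has_least_nat[of closed I card] by metis
  have fin_C: "finite C" using C fin by (auto simp: closed_def intro: finite_subset)
  have minimal: "\<forall>C'\<subset>C. C' \<noteq> {} \<longrightarrow> \<not> (\<forall>j\<in>C'. \<exists>i\<in>C'. E i j)"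
  proof (intro allI impI notI)
    fix C' assume "C' \<subset> C" "C' \<noteq> {}" "\<forall>j\<in>C'. \<exists>i\<in>C'. E i j"
    then have "closed C'" and "card C' < card C"
      using C fin_C by (auto simp: closed_def psubset_card_mono)
    with least[of C'] show False by simp
  qed
  have "\<forall>j\<in>C. \<not> E j j" using irrefl C by (auto simp: closed_def)
  moreover have "\<forall>j\<in>C. \<exists>i\<in>C. E i j" using C by (simp add: closed_def)
  ultimately obtain p where "bij_betw p C C" "\<forall>i\<in>C. \<forall>x\<in>C. E i x \<longleftrightarrow> i = p x"
    using minimal_pred_closed_is_cycle[OF fin_C _ _ minimal] by blast
  with C that show thesis unfolding closed_def by blast
qed

lemma odd_cover_outside_if_in_arcs:
  fixes R :: "'i \<Rightarrow> 'i set set"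
  assumes fin: "finite I" and ne: "I \<noteq> {}" and R: "\<forall>i\<in>I. \<forall>r\<in>R i. r \<subseteq> I \<and> i \<in> r"
    and in_arc: "\<forall>j\<in>I. \<exists>i\<in>I. i \<noteq> j \<and> (\<exists>r\<in>R i. j \<in> r)"
  obtains J \<rho> where "J \<subseteq> I" "J \<noteq> {}" "\<forall>i\<in>J. \<rho> i \<in> R i" "odd_cover J \<rho> \<subseteq> I - J"
proof -
  define E where "E i j \<longleftrightarrow> i \<noteq> j \<and> (\<exists>r\<in>R i. j \<in> r)" for i j
  have "\<forall>j\<in>I. \<not> E j j" and "\<forall>j\<in>I. \<exists>i\<in>I. E i j" using in_arc by (auto simp: E_def)
  then obtain C p where C: "C \<subseteq> I" "C \<noteq> {}" and p_bij: "bij_betw p C C"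
    and p_pred: "\<forall>i\<in>C. \<forall>x\<in>C. E i x \<longleftrightarrow> i = p x"
    using in_closed_contains_cycle[OF fin ne] by blast
  have "\<forall>x\<in>C. \<exists>r\<in>R (p x). x \<in> r"
    using p_pred p_bij by (auto simp: E_def bij_betw_def)
  then obtain \<sigma> where \<sigma>: "\<forall>x\<in>C. \<sigma> x \<in> R (p x) \<and> x \<in> \<sigma> x"
    by metis
  define \<rho> where "\<rho> i = \<sigma> (inv_into C p i)" for i
  have \<rho>_p: "\<rho> (p x) = \<sigma> x" if "x \<in> C" for x
    using p_bij that by (simp add: \<rho>_def bij_betw_def)
  have \<rho>_R: "\<rho> i \<in> R i" if "i \<in> C" for i
    using \<sigma> p_bij that by (metis \<rho>_p bij_betw_imp_surj_on imageE)
  have covers: "{i\<in>C. y \<in> \<rho> i} = {y, p y}" if y: "y \<in> C" for y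
  proof
    show "{i\<in>C. y \<in> \<rho> i} \<subseteq> {y, p y}"
      using p_pred \<rho>_R R C y by (auto simp: E_def)
    have "y \<in> \<rho> y" using \<rho>_R[OF y] R C y by blast
    moreover have "y \<in> \<rho> (p y)" using \<rho>_p[OF y] \<sigma> y by simp
    moreover have "p y \<in> C" using bij_betwE[OF p_bij] y by blast
    ultimately show "{y, p y} \<subseteq> {i\<in>C. y \<in> \<rho> i}" using y by blast
  qed
  have "y \<noteq> p y" if "y \<in> C" for y
    using p_pred p_bij that by (auto simp: E_def bij_betw_def)
  then have "y \<notin> odd_cover C \<rho>" if "y \<in> C" for y
    using covers[OF that] that by (simp add: odd_cover_def)
  moreover have "\<rho> i \<subseteq> I" if "i \<in> C" for i
    using \<rho>_R[OF that] R C that by blast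
  then have "odd_cover C \<rho> \<subseteq> I"
    using odd_cover_subset[of C \<rho>] by blast
  ultimately have "odd_cover C \<rho> \<subseteq> I - C" by blast
  with C \<rho>_R show thesis using that[of C \<rho>] by blast
qed

section \<open>Transversals, cuts and standard colorings\<close>

definition indep_transversals :: "('a set \<Rightarrow> bool) \<Rightarrow> 'a set set \<Rightarrow> bool" where
  "indep_transversals indep Q \<longleftrightarrow> (\<forall>f \<in> (\<Pi> A\<in>Q. A). indep (f ` Q))"

lemma partition_on_class_eq:
  "partition_on T Q \<Longrightarrow> A \<in> Q \<Longrightarrow> A' \<in> Q \<Longrightarrow> x \<in> A \<Longrightarrow> x \<in> A' \<Longrightarrow> A = A'"
  by (auto simp: partition_on_def dest: disjointD)

lemma partition_on_remove:
  assumes part: "partition_on T Q" and A: "A \<in> Q"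
  shows "partition_on (T - A) (Q - {A})"
proof -
  have "disjnt A (\<Union>(Q - {A}))"
    using partition_onD2[OF part] A by (auto dest: pairwiseD)
  moreover have "insert A (Q - {A}) = Q" using A by blast
  ultimately show ?thesis using partition_on_insert[of A "Q - {A}" T] part by simp
qed

lemma transversal_inj_on:
  assumes "partition_on T Q" "f \<in> (\<Pi> A\<in>Q. A)"
  shows "inj_on f Q"
proof (rule inj_onI)
  fix A A' assume "A \<in> Q" "A' \<in> Q" "f A = f A'"
  moreover from this have "f A \<in> A" "f A \<in> A'" using assms(2) by (metis Pi_mem)+
  ultimately show "A = A'" using partition_on_class_eq[OF assms(1)] by blast
qed

lemma transversal_subset:
  assumes "partition_on T Q" "f \<in> (\<Pi> A\<in>Q. A)"
  shows "f ` Q \<subseteq> T"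
  using assms by (auto simp: partition_on_def dest: Pi_mem)

lemma transversal_exists:
  assumes "partition_on T Q"
  obtains f where "f \<in> (\<Pi> A\<in>Q. A)"
proof -
  have "(\<Pi> A\<in>Q. A) \<noteq> {}" using partition_onD3[OF assms] by auto
  then show thesis using that by blast
qed

lemma standard_coloring_empty: "standard_coloring indep 0 {}"
  by (auto simp: standard_coloring_def bij_betw_def)

lemma standard_coloring_insert:
  assumes std: "standard_coloring indep n Q" and A: "A \<notin> Q"
    and cut: "is_cut indep (\<Union>(insert A Q)) A"
  shows "standard_coloring indep (Suc n) (insert A Q)"
proof -
  obtain Sc where bij: "bij_betw Sc {1..n} Q"
    and cuts: "\<forall>i\<in>{1..n}. is_cut indep (\<Union>j\<in>{1..i}. Sc j) (Sc i)"
    using std by (auto simp: standard_coloring_def)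
  define Sc' where "Sc' = Sc(Suc n := A)"
  have bij_n: "bij_betw Sc' {1..n} Q"
    using bij by (rule bij_betw_cong[THEN iffD1, rotated]) (auto simp: Sc'_def)
  moreover have "bij_betw Sc' {Suc n} {A}" by (simp add: Sc'_def bij_betw_def)
  ultimately have "bij_betw Sc' ({1..n} \<union> {Suc n}) (Q \<union> {A})"
    using A by (intro bij_betw_combine) auto
  then have bij': "bij_betw Sc' {1..Suc n} (insert A Q)"
    by (simp add: atLeastAtMostSuc_conv)
  have "is_cut indep (\<Union>j\<in>{1..i}. Sc' j) (Sc' i)" if "i \<in> {1..Suc n}" for i
  proof (cases "i = Suc n")
    case True
    have "(\<Union>j\<in>{1..Suc n}. Sc' j) = Sc' (Suc n) \<union> (\<Union>j\<in>{1..n}. Sc' j)"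
      by (auto simp: atLeastAtMostSuc_conv)
    also have "\<dots> = \<Union>(insert A Q)"
      using bij_n by (simp add: Sc'_def bij_betw_def)
    finally show ?thesis
      using True cut by (simp add: Sc'_def)
  next
    case False
    with that cuts show ?thesis by (auto simp: Sc'_def)
  qed
  with bij' show ?thesis by (auto simp: standard_coloring_def)
qed

lemma standard_coloring_first_class:
  assumes "standard_coloring indep r P" and "0 < r"
  shows "\<exists>A\<in>P. is_cut indep A A"
proof -
  obtain Sc where bij: "bij_betw Sc {1..r} P"
    and cuts: "\<forall>i\<in>{1..r}. is_cut indep (\<Union>j\<in>{1..i}. Sc j) (Sc i)"
    using assms(1) by (auto simp: standard_coloring_def)
  have one: "1 \<in> {1..r}" using assms(2) by simp
  have "Sc 1 \<in> P" using bij_betwE[OF bij] one by blast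
  moreover have "is_cut indep (Sc 1) (Sc 1)" using bspec[OF cuts one] by simp
  ultimately show ?thesis by blast
qed

lemma basis_of_maximal: "basis_of indep T B \<Longrightarrow> B \<subseteq> B' \<Longrightarrow> B' \<subseteq> T \<Longrightarrow> indep B' \<Longrightarrow> B' = B"
  by (simp add: basis_of_def)

lemma self_cut_pair_dependent:
  assumes cut: "is_cut indep A A" and e: "e \<in> A" and f: "f \<in> A" and "e \<noteq> f"
  shows "\<not> indep {e, f}"
proof
  assume ind: "indep {e, f}"
  have "A - {f} \<subset> A" using f by blast
  with cut obtain B where B: "basis_of indep A B" and disj: "(A - {f}) \<inter> B = {}"
    unfolding is_cut_def by blast
  have "B \<subseteq> {f}" using B disj by (auto simp: basis_of_def)
  moreover have "{e, f} = B"
    by (rule basis_of_maximal[OF B]) (use \<open>B \<subseteq> {f}\<close> e f ind in auto)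
  ultimately show False using \<open>e \<noteq> f\<close> by auto
qed

lemma finite_card_subsets: "finite S \<Longrightarrow> finite {card Y | Y. Y \<subseteq> S \<and> P Y}"
  by (rule finite_subset[of _ "card ` Pow S"]) auto

lemma parallelI:
  assumes "indep {e}" "indep {f}" "\<not> indep {e, f}"
  shows "parallel indep e f"
proof -
  have "mrank indep {e, f} = 1"
    unfolding mrank_def
  proof (rule Max_eqI)
    show "finite {card Y |Y. Y \<subseteq> {e, f} \<and> indep Y}" by (simp add: finite_card_subsets)
    show "1 \<in> {card Y |Y. Y \<subseteq> {e, f} \<and> indep Y}"
      using assms(1) by force
  next
    fix y assume "y \<in> {card Y |Y. Y \<subseteq> {e, f} \<and> indep Y}"
    then obtain Y where "Y \<subseteq> {e, f}" "Y \<noteq> {e, f}" "y = card Y"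
      using assms(3) by blast
    then have "Y \<subseteq> {e} \<or> Y \<subseteq> {f}" by blast
    then show "y \<le> 1"
      using \<open>y = card Y\<close> card_mono[of "{e}" Y] card_mono[of "{f}" Y] by auto
  qed
  with assms show ?thesis by (simp add: parallel_def)
qed

lemma indep_card_le_mrank:
  assumes "finite S" "X \<subseteq> S" "indep X"
  shows "card X \<le> mrank indep S"
proof -
  have "finite {card Y | Y. Y \<subseteq> S \<and> indep Y}"
    using assms(1) by (rule finite_card_subsets)
  then show ?thesis
    unfolding mrank_def using assms(2,3) by (auto intro: Max_ge)
qed

section \<open>Matroids\<close>

locale finite_matroid =
  fixes S :: "'a set" and indep :: "'a set \<Rightarrow> bool"
  assumes matroid: "matroid S indep"
begin

lemma finite_ground: "finite S"
  using matroid by (simp add: matroid_def)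

lemma indep_subset: "indep X \<Longrightarrow> Y \<subseteq> X \<Longrightarrow> indep Y"
  using matroid unfolding matroid_def by blast

lemma indep_augment: "indep X \<Longrightarrow> indep Y \<Longrightarrow> card X < card Y \<Longrightarrow> \<exists>e\<in>Y - X. indep (insert e X)"
  using matroid unfolding matroid_def by blast

lemma card_indep_le_basis:
  assumes B: "basis_of indep T B" and "Y \<subseteq> T" "indep Y"
  shows "card Y \<le> card B"
proof (rule ccontr)
  assume "\<not> card Y \<le> card B"
  then obtain e where e: "e \<in> Y - B" "indep (insert e B)"
    using indep_augment[of B Y] B \<open>indep Y\<close> by (auto simp: basis_of_def)
  have "insert e B = B"
    by (rule basis_of_maximal[OF B]) (use e \<open>Y \<subseteq> T\<close> B in \<open>auto simp: basis_of_def\<close>)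
  with e show False by blast
qed

lemma dependent_contains_circuit:
  assumes "X \<subseteq> S" and "\<not> indep X"
  obtains C where "C \<subseteq> X" and "circuit S indep C"
proof -
  let ?dep = "\<lambda>C. C \<subseteq> X \<and> \<not> indep C"
  obtain C where C: "?dep C" and least: "\<And>C'. ?dep C' \<Longrightarrow> card C \<le> card C'"
    using ex_has_least_nat[of ?dep X card] assms(2) by blast
  have "finite X" using assms(1) finite_ground by (rule finite_subset)
  then have "indep D" if "D \<subset> C" for D
    using least[of D] C that psubset_card_mono[of C D] finite_subset[of C X] by force
  with C assms(1) have "circuit S indep C" by (auto simp: circuit_def)
  with C show thesis using that by blast
qed

lemma indep_transversals_if_rainbow_circuit_free:
  assumes part: "partition_on S P" and rcf: "rainbow_circuit_free S indep P"
  shows "indep_transversals indep P"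
  unfolding indep_transversals_def
proof
  fix f assume f: "f \<in> (\<Pi> A\<in>P. A)"
  show "indep (f ` P)"
  proof (rule ccontr)
    assume dep: "\<not> indep (f ` P)"
    have "f ` P \<subseteq> S" using part f by (rule transversal_subset)
    then obtain C where "C \<subseteq> f ` P" and circ: "circuit S indep C"
      using dep by (rule dependent_contains_circuit)
    have "card (C \<inter> A) \<le> 1" if A: "A \<in> P" for A
    proof -
      have "C \<inter> A \<subseteq> {f A}"
      proof
        fix y assume y: "y \<in> C \<inter> A"
        then obtain A' where A': "A' \<in> P" "y = f A'" using \<open>C \<subseteq> f ` P\<close> by auto
        with Pi_mem[OF f] have "y \<in> A'" by simp
        with A' y have "A' = A" using partition_on_class_eq[OF part _ A] by blast
        with A' show "y \<in> {f A}" by simp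
      qed
      then have "card (C \<inter> A) \<le> card {f A}" by (rule card_mono[rotated]) simp
      then show ?thesis by simp
    qed
    with circ rcf show False unfolding rainbow_circuit_free_def by blast
  qed
qed

lemma indep_transversals_remove:
  assumes indep: "indep_transversals indep Q" and part: "partition_on T Q" and A: "A \<in> Q"
  shows "indep_transversals indep (Q - {A})"
  unfolding indep_transversals_def
proof
  fix f assume f: "f \<in> (\<Pi> A'\<in>Q - {A}. A')"
  obtain a where "a \<in> A" using partition_onD3[OF part] A by fastforce
  with f have "f(A := a) \<in> (\<Pi> A'\<in>Q. A')" by auto
  with indep have "indep (f(A := a) ` Q)" unfolding indep_transversals_def by blast
  then show "indep (f ` (Q - {A}))" by (rule indep_subset) auto
qed

lemma indep_singleton_if_indep_transversals:
  assumes indep: "indep_transversals indep Q" and part: "partition_on T Q"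
    and "A \<in> Q" "x \<in> A"
  shows "indep {x}"
proof -
  obtain b where "b \<in> (\<Pi> A\<in>Q. A)" using part by (rule transversal_exists)
  with assms(4) have "b(A := x) \<in> (\<Pi> A\<in>Q. A)" by auto
  with indep have "indep (b(A := x) ` Q)" unfolding indep_transversals_def by blast
  then show ?thesis by (rule indep_subset) (use \<open>A \<in> Q\<close> in auto)
qed

lemma transversal_is_basis:
  assumes "T \<subseteq> S" and part: "partition_on T Q" and indep: "indep_transversals indep Q"
    and rank: "\<forall>X\<subseteq>T. indep X \<longrightarrow> card X \<le> card Q" and f: "f \<in> (\<Pi> A\<in>Q. A)"
  shows "basis_of indep T (f ` Q)"
  unfolding basis_of_def
proof (intro conjI allI impI)
  show "f ` Q \<subseteq> T" using part f by (rule transversal_subset)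
  show "indep (f ` Q)" using indep f by (simp add: indep_transversals_def)
  fix B' assume B': "f ` Q \<subseteq> B' \<and> B' \<subseteq> T \<and> indep B'"
  then have "B' \<subseteq> S" using \<open>T \<subseteq> S\<close> by blast
  then have "finite B'" using finite_ground by (rule finite_subset)
  have "card B' \<le> card Q" using B' rank by blast
  also have "card Q = card (f ` Q)" using transversal_inj_on[OF part f] by (simp add: card_image)
  finally have "card (f ` Q) = card B'"
    using card_mono[OF \<open>finite B'\<close>] B' by (simp add: le_antisym)
  with \<open>finite B'\<close> B' have "f ` Q = B'" by (simp add: card_subset_eq)
  then show "B' = f ` Q" ..
qed

lemma class_is_cut:
  assumes T: "T \<subseteq> S" and part: "partition_on T Q" and indep: "indep_transversals indep Q"
    and rank: "\<forall>X\<subseteq>T. indep X \<longrightarrow> card X \<le> card Q"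
    and A: "A \<in> Q" and small: "\<forall>X\<subseteq>T - A. indep X \<longrightarrow> card X < card Q"
  shows "is_cut indep T A"
proof -
  obtain b where b: "b \<in> (\<Pi> A\<in>Q. A)" using part by (rule transversal_exists)
  have "A \<inter> B \<noteq> {}" if B: "basis_of indep T B" for B
  proof
    assume "A \<inter> B = {}"
    with B have "B \<subseteq> T - A" "indep B" by (auto simp: basis_of_def)
    then have "card B < card Q" using small by blast
    moreover have "basis_of indep T (b ` Q)" by (rule transversal_is_basis[OF T part indep rank b])
    then have "card (b ` Q) \<le> card B"
      using card_indep_le_basis[OF B] unfolding basis_of_def by blast
    ultimately show False using card_image[OF transversal_inj_on[OF part b]] by simp
  qed
  moreover have "\<exists>B. basis_of indep T B \<and> D \<inter> B = {}" if "D \<subset> A" for D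
  proof -
    from that obtain a where a: "a \<in> A" "a \<notin> D" by blast
    define f where "f = b(A := a)"
    have f: "f \<in> (\<Pi> A\<in>Q. A)" using b a by (auto simp: f_def)
    have "D \<inter> f ` Q = {}"
    proof (rule ccontr)
      assume "D \<inter> f ` Q \<noteq> {}"
      then obtain A' where A': "A' \<in> Q" "f A' \<in> D" by auto
      have "f A' \<in> A'" using Pi_mem[OF f A'(1)] .
      moreover have "f A' \<in> A" using A'(2) \<open>D \<subset> A\<close> by blast
      ultimately have "A' = A" by (rule partition_on_class_eq[OF part A'(1) A])
      with A' a show False by (simp add: f_def)
    qed
    then show ?thesis using transversal_is_basis[OF T part indep rank f] by blast
  qed
  moreover have "A \<subseteq> T" using A partition_onD1[OF part] by auto
  ultimately show ?thesis unfolding is_cut_def by blast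
qed

end

section \<open>Binary matroids\<close>

type_synonym gf2_vector = "nat \<Rightarrow> bit"

lemma gf2_vector_add_eq_0_iff: "(u::gf2_vector) + w = 0 \<longleftrightarrow> u = w"
proof -
  have "(a::bit) + b = 0 \<longleftrightarrow> a = b" for a b by (cases a; cases b) auto
  then show ?thesis by (simp only: fun_eq_iff plus_fun_apply zero_fun_apply)
qed

lemma gf2_vector_two_eq_0: "(2::gf2_vector) = 0"
  by (simp add: fun_eq_iff)

lemma sum_fun_apply: "(\<Sum>y\<in>Y. f y) x = (\<Sum>y\<in>Y. f y x)"
  by (induction Y rule: infinite_finite_induct) auto

locale binary_matroid = finite_matroid +
  fixes v :: "'a \<Rightarrow> gf2_vector"
  assumes indep_iff_no_zero_sum: "X \<subseteq> S \<Longrightarrow> indep X \<longleftrightarrow> \<not> (\<exists>Y\<subseteq>X. Y \<noteq> {} \<and> (\<Sum>y\<in>Y. v y) = 0)"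

lemma (in finite_matroid) binary_representation:
  assumes "binary S indep"
  obtains v where "binary_matroid S indep v"
proof -
  obtain v :: "'a \<Rightarrow> gf2_vector" where
    v: "\<forall>X\<subseteq>S. indep X \<longleftrightarrow> \<not> (\<exists>Y\<subseteq>X. Y \<noteq> {} \<and> (\<forall>k. (\<Sum>y\<in>Y. v y k) = 0))"
    using assms by (auto simp: binary_def)
  have "(\<forall>k. (\<Sum>y\<in>Y. v y k) = 0) \<longleftrightarrow> (\<Sum>y\<in>Y. v y) = 0" for Y
    by (simp add: fun_eq_iff sum_fun_apply)
  with v have "binary_matroid S indep v"
    by unfold_locales (simp_all add: matroid)
  then show thesis by (rule that)
qed

context binary_matroid
begin

lemma zero_sum_dependent:
  "X \<subseteq> S \<Longrightarrow> Y \<subseteq> X \<Longrightarrow> Y \<noteq> {} \<Longrightarrow> (\<Sum>y\<in>Y. v y) = 0 \<Longrightarrow> \<not> indep X"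
  using indep_iff_no_zero_sum by blast

lemma dependent_zero_sum:
  assumes "X \<subseteq> S" "\<not> indep X"
  obtains Y where "Y \<subseteq> X" "Y \<noteq> {}" "(\<Sum>y\<in>Y. v y) = 0"
  using indep_iff_no_zero_sum assms by blast

end

locale binary_reference_transversal = binary_matroid +
  fixes T :: "'a set" and Q :: "'a set set" and b :: "'a set \<Rightarrow> 'a"
  assumes subset_ground: "T \<subseteq> S" and partition: "partition_on T Q"
    and transversals: "indep_transversals indep Q" and reference: "b \<in> (\<Pi> A\<in>Q. A)"
begin

lemma finite_classes: "finite Q"
  using finite_elements[OF finite_subset[OF subset_ground finite_ground] partition] .

lemma inj_on_reference: "inj_on b Q"
  by (rule transversal_inj_on[OF partition reference])

lemma indep_reference: "indep (b ` Q)"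
  using transversals reference unfolding indep_transversals_def by blast

lemma transversal_sum_nonzero:
  assumes f: "f \<in> (\<Pi> A\<in>Q. A)" and K: "K \<subseteq> Q" "K \<noteq> {}"
  shows "(\<Sum>A\<in>K. v (f A)) \<noteq> 0"
proof
  assume zero: "(\<Sum>A\<in>K. v (f A)) = 0"
  have "inj_on f K"
    using transversal_inj_on[OF partition f] K(1) by (rule inj_on_subset)
  with zero have "(\<Sum>y\<in>f ` K. v y) = 0" by (simp add: sum.reindex)
  moreover have "f ` Q \<subseteq> S"
    using transversal_subset[OF partition f] subset_ground by blast
  moreover have "indep (f ` Q)"
    using transversals f unfolding indep_transversals_def by blast
  ultimately show False
    using zero_sum_dependent[of "f ` Q" "f ` K"] K by blast
qed

text \<open>A set r \<in> fundamental_sets A indexes the fundamental circuit, with respect to the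
  basis b ` Q, of some element of A.\<close>
definition fundamental_sets :: "'a set \<Rightarrow> 'a set set set" where
  "fundamental_sets A = {r. r \<subseteq> Q \<and> (\<exists>x\<in>A. (\<Sum>A'\<in>r. v (b A')) = v x)}"

lemma class_mem_fundamental_set:
  assumes A: "A \<in> Q" and r: "r \<in> fundamental_sets A"
  shows "A \<in> r"
proof (rule ccontr)
  assume "A \<notin> r"
  from r obtain x where r_Q: "r \<subseteq> Q" and x: "x \<in> A" "(\<Sum>A'\<in>r. v (b A')) = v x"
    by (auto simp: fundamental_sets_def)
  define f where "f = b(A := x)"
  have f: "f \<in> (\<Pi> A\<in>Q. A)" using reference x by (auto simp: f_def)
  have fin: "finite r" using r_Q finite_classes by (rule finite_subset)
  have "(\<Sum>A'\<in>r. v (f A')) = (\<Sum>A'\<in>r. v (b A'))"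
    by (rule sum.cong) (use \<open>A \<notin> r\<close> in \<open>auto simp: f_def\<close>)
  moreover have "f A = x" by (simp add: f_def)
  ultimately have "(\<Sum>A'\<in>insert A r. v (f A')) = v x + v x"
    using sum.insert[OF fin \<open>A \<notin> r\<close>, of "\<lambda>A'. v (f A')"] x(2) by simp
  also have "\<dots> = 0" by (simp only: gf2_vector_add_eq_0_iff)
  finally have "(\<Sum>A'\<in>insert A r. v (f A')) = 0" .
  moreover have "insert A r \<subseteq> Q" using A r_Q by blast
  ultimately show False using transversal_sum_nonzero[OF f] by blast
qed

lemma odd_cover_meets_classes:
  assumes J: "J \<subseteq> Q" "J \<noteq> {}" and \<rho>: "\<forall>A\<in>J. \<rho> A \<in> fundamental_sets A"
  shows "\<not> odd_cover J \<rho> \<subseteq> Q - J"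
proof
  let ?X = "odd_cover J \<rho>"
  assume X: "?X \<subseteq> Q - J"
  have "\<forall>A\<in>J. \<exists>y\<in>A. (\<Sum>A'\<in>\<rho> A. v (b A')) = v y"
    using \<rho> by (auto simp: fundamental_sets_def)
  then obtain x where x: "\<forall>A\<in>J. x A \<in> A \<and> (\<Sum>A'\<in>\<rho> A. v (b A')) = v (x A)"
    by metis
  define f where "f A = (if A \<in> J then x A else b A)" for A
  have f: "f \<in> (\<Pi> A\<in>Q. A)" using x reference by (auto simp: f_def)
  have fin_J: "finite J" using J(1) finite_classes by (rule finite_subset)
  have fin_X: "finite ?X" using X finite_classes finite_subset by blast
  have fin_\<rho>: "finite (\<rho> A)" if "A \<in> J" for A
    using \<rho> that finite_classes finite_subset by (fastforce simp: fundamental_sets_def)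
  have disj: "J \<inter> ?X = {}" using X by blast
  have "(\<Sum>A\<in>J \<union> ?X. v (f A)) = (\<Sum>A\<in>J. v (f A)) + (\<Sum>A\<in>?X. v (f A))"
    by (rule sum.union_disjoint[OF fin_J fin_X disj])
  also have "(\<Sum>A\<in>J. v (f A)) = (\<Sum>A\<in>J. \<Sum>A'\<in>\<rho> A. v (b A'))"
    using x by (intro sum.cong) (simp_all add: f_def)
  also have "\<dots> = (\<Sum>A\<in>?X. v (b A))"
    by (rule sum_odd_cover[OF gf2_vector_two_eq_0 fin_J fin_\<rho>])
  also have "(\<Sum>A\<in>?X. v (f A)) = (\<Sum>A\<in>?X. v (b A))"
    using disj by (intro sum.cong) (auto simp: f_def)
  finally have "(\<Sum>A\<in>J \<union> ?X. v (f A)) = 0"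
    by (simp only: gf2_vector_add_eq_0_iff)
  moreover have "J \<union> ?X \<subseteq> Q" using J(1) X by blast
  ultimately show False using transversal_sum_nonzero[OF f] J(2) by blast
qed

lemma fundamental_circuit:
  assumes rank: "\<forall>X\<subseteq>T. indep X \<longrightarrow> card X \<le> card Q" and x: "x \<in> T" "x \<notin> b ` Q"
  obtains r where "r \<subseteq> Q" and "(\<Sum>A\<in>r. v (b A)) = v x"
proof -
  have B_T: "b ` Q \<subseteq> T" by (rule transversal_subset[OF partition reference])
  have xB_T: "insert x (b ` Q) \<subseteq> T" using x(1) B_T by blast
  have "card (insert x (b ` Q)) = Suc (card Q)"
    using x(2) finite_classes card_image[OF inj_on_reference] by simp
  then have "\<not> indep (insert x (b ` Q))" using rank xB_T by (metis Suc_n_not_le_n)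
  moreover have "insert x (b ` Q) \<subseteq> S" using xB_T subset_ground by blast
  ultimately obtain Z where Z: "Z \<subseteq> insert x (b ` Q)" "Z \<noteq> {}" "(\<Sum>y\<in>Z. v y) = 0"
    using dependent_zero_sum by blast
  have "x \<in> Z"
  proof (rule ccontr)
    assume "x \<notin> Z"
    with Z(1) have "Z \<subseteq> b ` Q" by blast
    moreover have "b ` Q \<subseteq> S" using B_T subset_ground by blast
    ultimately show False using zero_sum_dependent Z(2,3) indep_reference by metis
  qed
  define r where "r = {A\<in>Q. b A \<in> Z}"
  have r_Q: "r \<subseteq> Q" by (auto simp: r_def)
  have "(\<Sum>A\<in>r. v (b A)) = (\<Sum>y\<in>b ` r. v y)"
    using inj_on_subset[OF inj_on_reference r_Q] by (simp add: sum.reindex)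
  also have "b ` r = Z - {x}" using Z(1) x(2) by (auto simp: r_def)
  finally have "(\<Sum>A\<in>r. v (b A)) = (\<Sum>y\<in>Z - {x}. v y)" .
  moreover have "finite Z" using Z(1) finite_classes by (simp add: finite_subset)
  then have "v x + (\<Sum>y\<in>Z - {x}. v y) = 0" using Z(3) \<open>x \<in> Z\<close> by (simp add: sum.remove)
  then have "v x = (\<Sum>y\<in>Z - {x}. v y)" by (simp only: gf2_vector_add_eq_0_iff)
  ultimately show thesis using that r_Q by simp
qed

lemma exchange_outside_class:
  assumes A: "A \<in> Q" and X: "X \<subseteq> T - A" "indep X" "card Q \<le> card X"
  obtains x where "x \<in> T - A" "x \<notin> b ` Q" "indep (insert x (b ` (Q - {A})))"
proof -
  let ?B' = "b ` (Q - {A})"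
  have "indep ?B'" using indep_reference by (rule indep_subset) blast
  moreover have "card ?B' < card X"
  proof -
    have "0 < card Q" using A finite_classes by (auto simp: card_gt_0_iff)
    moreover have "card ?B' = card Q - 1"
      using card_image[OF inj_on_subset[OF inj_on_reference, of "Q - {A}"]] A finite_classes
      by simp
    ultimately show ?thesis using X(3) by linarith
  qed
  ultimately obtain x where x: "x \<in> X" "x \<notin> ?B'" "indep (insert x ?B')"
    using indep_augment X(2) by blast
  have "x \<notin> b ` Q"
  proof
    assume "x \<in> b ` Q"
    with x(2) have "x = b A" by blast
    with Pi_mem[OF reference A] x(1) X(1) show False by blast
  qed
  with x X(1) that show thesis by blast
qed

lemma fundamental_set_through_class:
  assumes rank: "\<forall>X\<subseteq>T. indep X \<longrightarrow> card X \<le> card Q"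
    and A: "A \<in> Q" and X: "X \<subseteq> T - A" "indep X" "card Q \<le> card X"
  shows "\<exists>A'\<in>Q. A' \<noteq> A \<and> (\<exists>r\<in>fundamental_sets A'. A \<in> r)"
proof -
  obtain x where x: "x \<in> T - A" "x \<notin> b ` Q" and indep_x: "indep (insert x (b ` (Q - {A})))"
    using exchange_outside_class[OF A X] .
  then obtain A' where A': "A' \<in> Q" "x \<in> A'" "A' \<noteq> A"
    using partition_onD1[OF partition] by blast
  obtain r where r: "r \<subseteq> Q" "(\<Sum>A\<in>r. v (b A)) = v x"
    using fundamental_circuit[OF rank] x by blast
  with A'(2) have "r \<in> fundamental_sets A'" by (auto simp: fundamental_sets_def)
  moreover have "A \<in> r"
  proof (rule ccontr)
    assume "A \<notin> r"
    with r(1) have "insert x (b ` r) \<subseteq> insert x (b ` (Q - {A}))" by blast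
    moreover have "insert x (b ` (Q - {A})) \<subseteq> S"
      using x(1) transversal_subset[OF partition reference] subset_ground by blast
    moreover have "(\<Sum>y\<in>insert x (b ` r). v y) = 0"
    proof -
      have "finite r" using r(1) finite_classes by (rule finite_subset)
      moreover have "x \<notin> b ` r" using x(2) r(1) by blast
      moreover have "inj_on b r" using inj_on_reference r(1) by (rule inj_on_subset)
      ultimately have "(\<Sum>y\<in>insert x (b ` r). v y) = v x + (\<Sum>A\<in>r. v (b A))"
        by (simp add: sum.reindex)
      with r(2) show ?thesis by (simp only: gf2_vector_add_eq_0_iff)
    qed
    ultimately show False using zero_sum_dependent indep_x by blast
  qed
  ultimately show ?thesis using A'(1,3) by blast
qed

lemma exists_class_lowering_rank:
  assumes rank: "\<forall>X\<subseteq>T. indep X \<longrightarrow> card X \<le> card Q" and "Q \<noteq> {}"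
  shows "\<exists>A\<in>Q. \<forall>X\<subseteq>T - A. indep X \<longrightarrow> card X < card Q"
proof (rule ccontr)
  assume "\<not> ?thesis"
  then have in_arcs: "\<forall>A\<in>Q. \<exists>A'\<in>Q. A' \<noteq> A \<and> (\<exists>r\<in>fundamental_sets A'. A \<in> r)"
    using fundamental_set_through_class[OF rank] by (meson not_less)
  have "\<forall>A\<in>Q. \<forall>r\<in>fundamental_sets A. r \<subseteq> Q \<and> A \<in> r"
    using class_mem_fundamental_set by (auto simp: fundamental_sets_def)
  then obtain J \<rho> where "J \<subseteq> Q" "J \<noteq> {}" "\<forall>A\<in>J. \<rho> A \<in> fundamental_sets A"
    and "odd_cover J \<rho> \<subseteq> Q - J"
    using odd_cover_outside_if_in_arcs[OF finite_classes \<open>Q \<noteq> {}\<close> _ in_arcs] by blast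
  with odd_cover_meets_classes show False by blast
qed

end

context binary_matroid
begin

lemma standard_coloring_if_indep_transversals:
  assumes "T \<subseteq> S" and "partition_on T Q" and "indep_transversals indep Q"
    and "\<forall>X\<subseteq>T. indep X \<longrightarrow> card X \<le> card Q"
  shows "standard_coloring indep (card Q) Q"
  using assms
proof (induction "card Q" arbitrary: T Q)
  case 0
  have "finite T" using 0(2) finite_ground by (rule finite_subset)
  then have "finite Q" using 0(3) by (rule finite_elements)
  with 0(1) have "Q = {}" by simp
  then show ?case by (simp add: standard_coloring_empty)
next
  case (Suc n)
  obtain b where b: "b \<in> (\<Pi> A\<in>Q. A)" using Suc.prems(2) by (rule transversal_exists)
  interpret reference: binary_reference_transversal S indep v T Q b
    using Suc.prems b by unfold_locales
  have "Q \<noteq> {}" using Suc.hyps(2) by auto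
  then obtain A where A: "A \<in> Q" and small: "\<forall>X\<subseteq>T - A. indep X \<longrightarrow> card X < card Q"
    using reference.exists_class_lowering_rank Suc.prems(4) by blast
  have Q_eq: "insert A (Q - {A}) = Q" using A by blast
  have card_rest: "card (Q - {A}) = n" using Suc.hyps(2) A by simp
  have "standard_coloring indep (card (Q - {A})) (Q - {A})"
  proof (rule Suc.hyps(1))
    show "n = card (Q - {A})" by (rule card_rest[symmetric])
    show "T - A \<subseteq> S" using Suc.prems(1) by blast
    show "partition_on (T - A) (Q - {A})" by (rule partition_on_remove[OF Suc.prems(2) A])
    show "indep_transversals indep (Q - {A})"
      by (rule indep_transversals_remove[OF Suc.prems(3,2) A])
    show "\<forall>X\<subseteq>T - A. indep X \<longrightarrow> card X \<le> card (Q - {A})"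
      using small Suc.hyps(2)[symmetric] card_rest by (simp add: less_Suc_eq_le)
  qed
  moreover have "is_cut indep (\<Union>(insert A (Q - {A}))) A"
    using class_is_cut[OF Suc.prems A small] partition_onD1[OF Suc.prems(2)] Q_eq by simp
  ultimately have "standard_coloring indep (Suc (card (Q - {A}))) (insert A (Q - {A}))"
    using standard_coloring_insert by blast
  then show ?case using Q_eq card_rest Suc.hyps(2) by simp
qed

end

theorem corollary3:
  fixes S :: "'a set" and indep :: "'a set \<Rightarrow> bool" and P :: "'a set set" and r :: nat
  assumes "matroid S indep"
    and "loopless S indep"
    and "binary S indep"
    and "r = mrank indep S"
    and "partition_on S P"
    and "card P = r"
    and "rainbow_circuit_free S indep P"
  shows "standard_coloring indep r P \<and>
         (0 < r \<longrightarrow> (\<exists>A\<in>P. \<forall>e\<in>A. \<forall>f\<in>A. e \<noteq> f \<longrightarrow> parallel indep e f))"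
proof -
  interpret finite_matroid S indep by unfold_locales (fact assms(1))
  obtain v where "binary_matroid S indep v" using assms(3) by (rule binary_representation)
  then interpret binary_matroid S indep v .
  have transversals: "indep_transversals indep P"
    using assms(5,7) by (rule indep_transversals_if_rainbow_circuit_free)
  have "\<forall>X\<subseteq>S. indep X \<longrightarrow> card X \<le> card P"
    using indep_card_le_mrank[OF finite_ground] assms(4,6) by simp
  then have std: "standard_coloring indep r P"
    using standard_coloring_if_indep_transversals[OF order_refl assms(5) transversals] assms(6)
    by simp
  moreover have "\<exists>A\<in>P. \<forall>e\<in>A. \<forall>f\<in>A. e \<noteq> f \<longrightarrow> parallel indep e f" if r_pos: "0 < r"
  proof -
    obtain A where A: "A \<in> P" and cut: "is_cut indep A A"
      using standard_coloring_first_class[OF std r_pos] by blast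
    have "parallel indep e f" if "e \<in> A" "f \<in> A" "e \<noteq> f" for e f
      using indep_singleton_if_indep_transversals[OF transversals assms(5) A] that
        self_cut_pair_dependent[OF cut that] by (intro parallelI) auto
    with A show ?thesis by blast
  qed
  ultimately show ?thesis by blast
qed

end
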